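(* Let $w,\mathrm{dim},d$ be positive integers and let the dataset be the full integer grid $S=X=\{(a_1,\dots,a_{\mathrm{dim}}) : a_i\in\mathbb{N},\ a_i\le w \text{ for all } i\}$, with $n=|S|$ points. Let $H$ be the class of binary decision trees of height at most $d$ on $X$ in which every internal node tests a feature dimension distinct from those tested by all of its ancestors. Then the disagreement coefficient $\theta$ of $H$ on $S$ satisfies $\theta=O(\ln^{d}(n))$ and $\theta=\Omega\big(c\,(\ln(n)-c')^{d-1}\big)$, where $c=\frac{2^{-\mathrm{dim}}}{d^{d-1}\,d!}$ and $c'=\ln(4)\,\mathrm{dim}$.
   Context: A decision tree classifies a point $x$ by routing it from the root: each internal node compares one coordinate $x_a$ with a threshold $t$ (going to one child if $x_a\ge t$ and to the other otherwise) and each leaf carries a label in $\{0,1\}$. For a finite dataset $S$ of $n$ points and $h,h'\in H$, $D_S(h,h')=\frac1n\sum_{x\in S}\mathbb{I}(h(x)\ne h'(x))$; the ball is $B_H(h,r)=\{h'\in H: D_S(h,h')\le r\}$; for $V\subseteq H$ the disagreement region is $\mathrm{DIS}_S(V)=\{x\in S:\exists h_1,h_2\in V,\ h_1(x)\neq h_2(x)\}$. The disagreement coefficient of $h$ is $\theta_h=\sup_{r>0}\frac{|\mathrm{DIS}_S(B_H(h,r))|}{rn}$ and that of $H$ is $\theta=\sup_{h\in H}\theta_h$. *)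

theory Defs
  imports Complex_Main "HOL-Library.Landau_Symbols"
begin

datatype dtree = Leaf bool | Node nat real dtree dtree

fun classify :: "dtree \<Rightarrow> nat list \<Rightarrow> bool" where
  "classify (Leaf b) x = b"
| "classify (Node a t l r) x = (if real (x ! a) \<ge> t then classify l x else classify r x)"

fun height :: "dtree \<Rightarrow> nat" where
  "height (Leaf b) = 0"
| "height (Node a t l r) = Suc (max (height l) (height r))"

fun valid_tree :: "nat \<Rightarrow> nat set \<Rightarrow> dtree \<Rightarrow> bool" where
  "valid_tree nf A (Leaf b) = True"
| "valid_tree nf A (Node a t l r) =
     (a < nf \<and> a \<notin> A \<and> valid_tree nf (insert a A) l \<and> valid_tree nf (insert a A) r)"

definition grid :: "nat \<Rightarrow> nat \<Rightarrow> nat list set" where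
  "grid nf w = {xs. length xs = nf \<and> (\<forall>i<nf. xs ! i \<le> w)}"

definition DT_class :: "nat \<Rightarrow> nat \<Rightarrow> (nat list \<Rightarrow> bool) set" where
  "DT_class nf d = {classify T | T. valid_tree nf {} T \<and> height T \<le> d}"

definition dist_S :: "'a set \<Rightarrow> ('a \<Rightarrow> bool) \<Rightarrow> ('a \<Rightarrow> bool) \<Rightarrow> real" where
  "dist_S S h h' = real (card {x\<in>S. h x \<noteq> h' x}) / real (card S)"

definition ball_H :: "('a \<Rightarrow> bool) set \<Rightarrow> 'a set \<Rightarrow> ('a \<Rightarrow> bool) \<Rightarrow> real \<Rightarrow> ('a \<Rightarrow> bool) set" where
  "ball_H H S h r = {h'\<in>H. dist_S S h h' \<le> r}"

definition DIS :: "'a set \<Rightarrow> ('a \<Rightarrow> bool) set \<Rightarrow> 'a set" where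
  "DIS S V = {x\<in>S. \<exists>h1\<in>V. \<exists>h2\<in>V. h1 x \<noteq> h2 x}"

definition dis_coeff_h :: "('a \<Rightarrow> bool) set \<Rightarrow> 'a set \<Rightarrow> ('a \<Rightarrow> bool) \<Rightarrow> real" where
  "dis_coeff_h H S h =
     (SUP r\<in>{0<..}. real (card (DIS S (ball_H H S h r))) / (r * real (card S)))"

definition dis_coeff :: "('a \<Rightarrow> bool) set \<Rightarrow> 'a set \<Rightarrow> real" where
  "dis_coeff H S = (SUP h\<in>H. dis_coeff_h H S h)"

end

theory Submission
  imports Defs "HOL-Analysis.Harmonic_Numbers"
begin

text \<open>
  Let \<open>h = classify T\<close> and let \<open>x\<close> lie in the disagreement region of the
  \<open>r\<close>-ball around \<open>h\<close>, so some \<open>h' = classify T'\<close> in the ball has \<open>h' x \<noteq> h x\<close>. Every point of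
  the leaf cell of \<open>x\<close> in \<open>T\<close> that passes the tests on the route of \<open>x\<close> through \<open>T'\<close> is
  classified like \<open>x\<close> by both trees, hence lies in the disagreement set of \<open>h\<close> and \<open>h'\<close>,
  which has at most \<open>r n\<close> points. Those points contain the orthant of \<open>x\<close> in the cell that
  is cut out by one-sided constraints on the (at most \<open>d\<close>, distinct) features of that route.
  In a product of chains of length at most \<open>w + 1\<close>, at most \<open>m H\<^sub>w\<^sub>+\<^sub>1\<^sup>k\<close> points have a
  \<open>k\<close>-constraint orthant with at most \<open>m\<close> points (\<open>H\<close> the harmonic numbers); summing over
  the \<open>2\<^sup>d\<close> leaves of \<open>T\<close> and the finitely many route shapes gives
  \<open>\<theta> \<le> C H\<^sub>w\<^sub>+\<^sub>1\<^sup>d = O(ln\<^sup>d n)\<close>.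

  Around the constant classifier take the trees accepting exactly the points
  that dominate \<open>x\<close> in the first \<open>d\<close> features; such a tree lies in the ball of radius \<open>r\<close> as
  soon as \<open>(\<Prod>a<d. w + 1 - x\<^sub>a) (w + 1)\<^bsup>nf - d\<^esup> \<le> r n\<close>. With \<open>2\<^sup>E \<le> w + 1\<close> and
  \<open>r n = 2\<^sup>E (w + 1)\<^bsup>nf - d\<^esup>\<close>, counting the lists of \<open>d\<close> positive integers with product at most
  \<open>2\<^sup>E\<close> by the dyadic range of their first entry gives \<open>\<theta> \<ge> (E choose (d - 1)) / 2\<^bsup>d - 1\<^esup>\<close>.
\<close>

section \<open>Boxes of lists and their orthants\<close>

definition list_box :: "nat \<Rightarrow> (nat \<Rightarrow> 'a set) \<Rightarrow> 'a list set" where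
  "list_box nf I = {xs. length xs = nf \<and> (\<forall>i<nf. xs ! i \<in> I i)}"

lemma grid_eq_list_box: "grid nf w = list_box nf (\<lambda>_. {..w})"
  unfolding grid_def list_box_def by auto

lemma grid_eq_lists: "grid nf w = {xs. set xs \<subseteq> {..w} \<and> length xs = nf}"
  unfolding grid_def by (auto simp: in_set_conv_nth subset_iff)

lemma bij_betw_list_box_PiE:
  "bij_betw (\<lambda>xs. restrict (nth xs) {..<nf}) (list_box nf I) (\<Pi>\<^sub>E i\<in>{..<nf}. I i)"
proof (rule bij_betw_byWitness[where f' = "\<lambda>f. map f [0..<nf]"])
  show "\<forall>xs\<in>list_box nf I. map (restrict (nth xs) {..<nf}) [0..<nf] = xs"
    unfolding list_box_def by (auto intro: nth_equalityI)
  show "\<forall>f\<in>\<Pi>\<^sub>E i\<in>{..<nf}. I i. restrict (nth (map f [0..<nf])) {..<nf} = f"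
    by (auto simp: PiE_iff extensional_def fun_eq_iff)
  show "(\<lambda>xs. restrict (nth xs) {..<nf}) ` list_box nf I \<subseteq> (\<Pi>\<^sub>E i\<in>{..<nf}. I i)"
  proof (rule image_subsetI)
    fix xs assume "xs \<in> list_box nf I"
    then have "\<forall>i\<in>{..<nf}. xs ! i \<in> I i"
      by (simp add: list_box_def)
    then show "restrict (nth xs) {..<nf} \<in> (\<Pi>\<^sub>E i\<in>{..<nf}. I i)"
      by (simp only: restrict_PiE_iff)
  qed
  show "(\<lambda>f. map f [0..<nf]) ` (\<Pi>\<^sub>E i\<in>{..<nf}. I i) \<subseteq> list_box nf I"
  proof (rule image_subsetI)
    fix f assume "f \<in> (\<Pi>\<^sub>E i\<in>{..<nf}. I i)"
    then show "map f [0..<nf] \<in> list_box nf I"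
      by (simp add: list_box_def PiE_iff)
  qed
qed

lemma card_list_box: "card (list_box nf I) = (\<Prod>i<nf. card (I i))"
  using bij_betw_same_card[OF bij_betw_list_box_PiE] by (simp add: card_PiE)

lemma finite_list_box: "(\<And>i. i < nf \<Longrightarrow> finite (I i)) \<Longrightarrow> finite (list_box nf I)"
  unfolding bij_betw_finite[OF bij_betw_list_box_PiE] by (intro finite_PiE) auto

lemma card_grid: "card (grid nf w) = Suc w ^ nf"
  by (simp add: grid_eq_list_box card_list_box)

lemma finite_grid: "finite (grid nf w)"
  by (simp add: grid_eq_list_box finite_list_box)

definition dir_le :: "bool \<Rightarrow> 'a::linorder \<Rightarrow> 'a \<Rightarrow> bool" where
  "dir_le up v u \<longleftrightarrow> (if up then v \<le> u else u \<le> v)"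

definition orthant ::
    "nat \<Rightarrow> (nat \<Rightarrow> 'a::linorder set) \<Rightarrow> (nat \<times> bool) list \<Rightarrow> 'a list \<Rightarrow> 'a list set" where
  "orthant nf I \<sigma> x = {y \<in> list_box nf I. \<forall>(a, up) \<in> set \<sigma>. dir_le up (x ! a) (y ! a)}"

definition small_orthant_points ::
    "nat \<Rightarrow> (nat \<Rightarrow> 'a::linorder set) \<Rightarrow> (nat \<times> bool) list \<Rightarrow> real \<Rightarrow> 'a list set" where
  "small_orthant_points nf I \<sigma> m = {x \<in> list_box nf I. real (card (orthant nf I \<sigma> x)) \<le> m}"

lemma finite_small_orthant_points:
  assumes "\<And>i. i < nf \<Longrightarrow> finite (I i)"
  shows "finite (small_orthant_points nf I \<sigma> m)"
  using finite_list_box[OF assms] unfolding small_orthant_points_def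
  by (rule finite_subset[rotated]) auto

lemma finite_orthant:
  assumes "\<And>i. i < nf \<Longrightarrow> finite (I i)"
  shows "finite (orthant nf I \<sigma> x)"
  using finite_list_box[OF assms] unfolding orthant_def by (rule finite_subset[rotated]) auto

text \<open>The number of elements beyond \<open>v\<close> is injective in \<open>v\<close> with values in \<open>{1..card A}\<close>.\<close>

lemma sum_inverse_card_dir_le:
  fixes A :: "'a::linorder set"
  assumes "finite A"
  shows "(\<Sum>v\<in>A. 1 / real (card {u\<in>A. dir_le up v u})) \<le> harm (card A)"
proof -
  define c where "c v = card {u\<in>A. dir_le up v u}" for v
  have c_less: "c v' < c v" if "v \<in> A" "dir_le up v v'" "v \<noteq> v'" for v v'
  proof -
    have "{u\<in>A. dir_le up v' u} \<subseteq> {u\<in>A. dir_le up v u}"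
      "v \<in> {u\<in>A. dir_le up v u} - {u\<in>A. dir_le up v' u}"
      using that by (cases up; auto simp: dir_le_def)+
    then have "{u\<in>A. dir_le up v' u} \<subset> {u\<in>A. dir_le up v u}"
      by blast
    then show ?thesis
      unfolding c_def by (rule psubset_card_mono[rotated]) (use assms in auto)
  qed
  have "inj_on c A"
  proof (rule inj_onI, rule ccontr)
    fix v v' assume "v \<in> A" "v' \<in> A" "c v = c v'" "v \<noteq> v'"
    moreover have "dir_le up v v' \<or> dir_le up v' v"
      by (auto simp: dir_le_def)
    ultimately show False
      using c_less by (metis less_irrefl)
  qed
  have "c ` A \<subseteq> {1..card A}"
  proof
    fix j assume "j \<in> c ` A"
    then obtain v where "v \<in> A" "j = c v"
      by blast
    moreover have "v \<in> {u\<in>A. dir_le up v u}"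
      using \<open>v \<in> A\<close> by (simp add: dir_le_def)
    ultimately show "j \<in> {1..card A}"
      unfolding c_def using assms by (auto simp: Suc_le_eq card_gt_0_iff intro: card_mono)
  qed
  have "(\<Sum>v\<in>A. 1 / real (c v)) = (\<Sum>j\<in>c ` A. 1 / real j)"
    by (simp add: sum.reindex[OF \<open>inj_on c A\<close>])
  also have "\<dots> \<le> (\<Sum>j\<in>{1..card A}. 1 / real j)"
    by (rule sum_mono2) (use \<open>c ` A \<subseteq> {1..card A}\<close> in auto)
  finally show ?thesis
    by (simp add: c_def harm_def divide_inverse)
qed

lemma orthant_Cons:
  assumes "a < nf"
  shows "orthant nf I ((a, up) # \<sigma>) x
    = (\<Union>u\<in>{u\<in>I a. dir_le up (x ! a) u}. orthant nf (I(a := {u})) \<sigma> x)"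
  using assms unfolding orthant_def list_box_def by (auto split: if_splits)

lemma card_orthant_slice_eq:
  assumes "a < nf" "a \<notin> fst ` set \<sigma>"
  shows "card (orthant nf (I(a := {u})) \<sigma> x) = card (orthant nf (I(a := {v})) \<sigma> x)"
proof -
  have fresh: "b \<noteq> a" if "(b, up) \<in> set \<sigma>" for b up
    using that assms(2) by force
  have move: "y[a := v'] \<in> orthant nf (I(a := {v'})) \<sigma> x"
    if y: "y \<in> orthant nf (I(a := {u'})) \<sigma> x" for y u' v'
  proof -
    have len: "length y = nf" and box: "\<forall>i<nf. i \<noteq> a \<longrightarrow> y ! i \<in> I i"
      and dir: "\<forall>(b, up)\<in>set \<sigma>. dir_le up (x ! b) (y ! b)"
      using y unfolding orthant_def list_box_def by auto
    have "y[a := v'] ! b = y ! b" if "(b, up) \<in> set \<sigma>" for b up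
      using fresh[OF that] by simp
    then have "\<forall>(b, up)\<in>set \<sigma>. dir_le up (x ! b) (y[a := v'] ! b)"
      using dir by fastforce
    moreover have "\<forall>i<nf. y[a := v'] ! i \<in> (I(a := {v'})) i"
      using len box by (simp add: nth_list_update)
    ultimately show ?thesis
      using len unfolding orthant_def list_box_def by simp
  qed
  have undo: "y[a := u', a := v'] = y" if y: "y \<in> orthant nf (I(a := {v'})) \<sigma> x" for y u' v'
  proof -
    have "y ! a = v'"
      using y assms(1) unfolding orthant_def list_box_def by auto
    then show ?thesis
      by (metis list_update_id list_update_overwrite)
  qed
  have "bij_betw (\<lambda>y. y[a := v]) (orthant nf (I(a := {u})) \<sigma> x) (orthant nf (I(a := {v})) \<sigma> x)"
    by (rule bij_betw_byWitness[where f' = "\<lambda>y. y[a := u]"]) (use move undo in blast)+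
  then show ?thesis
    by (rule bij_betw_same_card)
qed

lemma card_orthant_Cons:
  assumes fin: "\<And>i. i < nf \<Longrightarrow> finite (I i)" and a: "a < nf" "a \<notin> fst ` set \<sigma>"
  shows "card (orthant nf I ((a, up) # \<sigma>) x)
    = card {u\<in>I a. dir_le up (x ! a) u} * card (orthant nf (I(a := {x ! a})) \<sigma> x)"
proof -
  let ?U = "{u\<in>I a. dir_le up (x ! a) u}"
  have "card (orthant nf I ((a, up) # \<sigma>) x) = (\<Sum>u\<in>?U. card (orthant nf (I(a := {u})) \<sigma> x))"
    unfolding orthant_Cons[OF a(1)]
  proof (rule card_UN_disjoint)
    show "finite ?U"
      using fin a(1) by simp
    show "\<forall>u\<in>?U. finite (orthant nf (I(a := {u})) \<sigma> x)"
      using fin by (auto intro: finite_orthant)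
    show "\<forall>u\<in>?U. \<forall>u'\<in>?U. u \<noteq> u' \<longrightarrow>
        orthant nf (I(a := {u})) \<sigma> x \<inter> orthant nf (I(a := {u'})) \<sigma> x = {}"
      using a(1) unfolding orthant_def list_box_def by auto
  qed
  also have "\<dots> = (\<Sum>u\<in>?U. card (orthant nf (I(a := {x ! a})) \<sigma> x))"
    by (rule sum.cong) (use card_orthant_slice_eq[OF a] in auto)
  also have "\<dots> = card ?U * card (orthant nf (I(a := {x ! a})) \<sigma> x)"
    by simp
  finally show ?thesis .
qed

lemma small_orthant_points_Cons_subset:
  assumes fin: "\<And>i. i < nf \<Longrightarrow> finite (I i)" and a: "a < nf" "a \<notin> fst ` set \<sigma>"
  shows "small_orthant_points nf I ((a, up) # \<sigma>) m
    \<subseteq> (\<Union>v\<in>I a. small_orthant_points nf (I(a := {v})) \<sigma> (m / real (card {u\<in>I a. dir_le up v u})))"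
proof
  fix x assume x: "x \<in> small_orthant_points nf I ((a, up) # \<sigma>) m"
  let ?v = "x ! a"
  let ?c = "card {u\<in>I a. dir_le up ?v u}"
  have v: "?v \<in> I a" and x_slice: "x \<in> list_box nf (I(a := {?v}))"
    using x a(1) unfolding small_orthant_points_def list_box_def by auto
  have "?v \<in> {u\<in>I a. dir_le up ?v u}"
    using v by (simp add: dir_le_def)
  then have "0 < ?c"
    using fin[OF a(1)] by (auto simp: card_gt_0_iff)
  moreover have "real ?c * real (card (orthant nf (I(a := {?v})) \<sigma> x)) \<le> m"
    using x card_orthant_Cons[OF fin a, where up = up and x = x]
    unfolding small_orthant_points_def by simp
  ultimately have "real (card (orthant nf (I(a := {?v})) \<sigma> x)) \<le> m / real ?c"
    by (simp add: field_simps)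
  then show "x \<in> (\<Union>v\<in>I a. small_orthant_points nf (I(a := {v})) \<sigma>
      (m / real (card {u\<in>I a. dir_le up v u})))"
    using v x_slice unfolding small_orthant_points_def by blast
qed

text \<open>Peeling off the first constraint, the budget of the slice through \<open>v\<close> shrinks by the
  number of values beyond \<open>v\<close>, and these reciprocals sum to at most a harmonic number.\<close>

lemma card_small_orthant_points_le:
  fixes I :: "nat \<Rightarrow> 'a::linorder set"
  assumes "\<And>i. i < nf \<Longrightarrow> finite (I i) \<and> card (I i) \<le> N"
    and "distinct (map fst \<sigma>)" "fst ` set \<sigma> \<subseteq> {..<nf}" "0 \<le> m"
  shows "real (card (small_orthant_points nf I \<sigma> m)) \<le> m * harm N ^ length \<sigma>"
  using assms
proof (induction \<sigma> arbitrary: I m)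
  case Nil
  then show ?case
    by (cases "real (card (list_box nf I)) \<le> m") (auto simp: small_orthant_points_def orthant_def)
next
  case (Cons aup \<sigma>)
  obtain a up where aup: "aup = (a, up)"
    by force
  have a: "a < nf" "a \<notin> fst ` set \<sigma>"
    using Cons.prems(2,3) aup by auto
  have fin: "\<And>i. i < nf \<Longrightarrow> finite (I i)"
    using Cons.prems(1) by blast
  define c where "c v = real (card {u\<in>I a. dir_le up v u})" for v
  have IH: "real (card (small_orthant_points nf (I(a := {v})) \<sigma> m')) \<le> m' * harm N ^ length \<sigma>"
    if "v \<in> I a" "0 \<le> m'" for v m'
  proof (rule Cons.IH)
    have "1 \<le> card (I a)"
      using that(1) fin[OF a(1)] by (auto simp: Suc_le_eq card_gt_0_iff)
    then show "\<And>i. i < nf \<Longrightarrow> finite ((I(a := {v})) i) \<and> card ((I(a := {v})) i) \<le> N"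
      using Cons.prems(1) by fastforce
  qed (use Cons.prems that in auto)
  have "small_orthant_points nf I (aup # \<sigma>) m
      \<subseteq> (\<Union>v\<in>I a. small_orthant_points nf (I(a := {v})) \<sigma> (m / c v))"
    unfolding aup c_def by (rule small_orthant_points_Cons_subset[OF fin a])
  then have "card (small_orthant_points nf I (aup # \<sigma>) m)
      \<le> card (\<Union>v\<in>I a. small_orthant_points nf (I(a := {v})) \<sigma> (m / c v))"
    by (rule card_mono[rotated], intro finite_UN_I finite_small_orthant_points)
      (use fin a(1) in auto)
  also have "\<dots> \<le> (\<Sum>v\<in>I a. card (small_orthant_points nf (I(a := {v})) \<sigma> (m / c v)))"
    by (rule card_UN_le[OF fin[OF a(1)]])
  finally have "real (card (small_orthant_points nf I (aup # \<sigma>) m))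
      \<le> (\<Sum>v\<in>I a. real (card (small_orthant_points nf (I(a := {v})) \<sigma> (m / c v))))"
    by (simp only: of_nat_sum[symmetric] of_nat_le_iff)
  also have "\<dots> \<le> (\<Sum>v\<in>I a. m / c v * harm N ^ length \<sigma>)"
    by (intro sum_mono IH) (use Cons.prems(4) in \<open>auto simp: c_def\<close>)
  also have "\<dots> = m * harm N ^ length \<sigma> * (\<Sum>v\<in>I a. 1 / c v)"
    by (simp add: sum_distrib_left)
  also have "\<dots> \<le> m * harm N ^ length \<sigma> * harm N"
  proof (rule mult_left_mono)
    have "(\<Sum>v\<in>I a. 1 / c v) \<le> harm (card (I a))"
      unfolding c_def by (rule sum_inverse_card_dir_le[OF fin[OF a(1)]])
    also have "\<dots> \<le> harm N"
      using Cons.prems(1)[OF a(1)] by (intro harm_mono) auto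
    finally show "(\<Sum>v\<in>I a. 1 / c v) \<le> harm N" .
  qed (use Cons.prems(4) in \<open>simp add: harm_nonneg\<close>)
  finally show ?case
    by (simp add: algebra_simps)
qed

section \<open>Routes through a decision tree\<close>

text \<open>The type
  of trees is written \<open>Defs.dtree\<close> because \<open>HOL-Library.Old_Datatype\<close>, loaded with
  \<open>HOL-Analysis\<close>, also declares a type \<open>dtree\<close>.\<close>

type_synonym tests = "(nat \<times> real \<times> bool) list"

fun route :: "Defs.dtree \<Rightarrow> nat list \<Rightarrow> tests" where
  "route (Leaf b) x = []"
| "route (Node a t l r) x =
    (if t \<le> real (x ! a) then (a, t, True) # route l x else (a, t, False) # route r x)"

fun routes :: "Defs.dtree \<Rightarrow> tests set" where
  "routes (Leaf b) = {[]}"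
| "routes (Node a t l r) = Cons (a, t, True) ` routes l \<union> Cons (a, t, False) ` routes r"

definition passes :: "tests \<Rightarrow> nat list \<Rightarrow> bool" where
  "passes p y \<longleftrightarrow> (\<forall>(a, t, b)\<in>set p. (t \<le> real (y ! a)) = b)"

definition cell :: "nat \<Rightarrow> tests \<Rightarrow> nat \<Rightarrow> nat set" where
  "cell w p i = {v. v \<le> w \<and> (\<forall>(a, t, b)\<in>set p. a = i \<longrightarrow> (t \<le> real v) = b)}"

definition shape :: "tests \<Rightarrow> (nat \<times> bool) list" where
  "shape p = map (\<lambda>(a, t, b). (a, b)) p"

definition shapes :: "nat \<Rightarrow> nat \<Rightarrow> (nat \<times> bool) list set" where
  "shapes nf d = {\<sigma>. set \<sigma> \<subseteq> {..<nf} \<times> UNIV \<and> length \<sigma> \<le> d \<and> distinct (map fst \<sigma>)}"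

lemma passes_route: "passes (route T x) x"
  by (induction T) (auto simp: passes_def)

lemma classify_eq_if_passes_route: "passes (route T x) y \<Longrightarrow> classify T y = classify T x"
  by (induction T) (auto simp: passes_def split: if_splits)

lemma route_in_routes: "route T x \<in> routes T"
  by (induction T) auto

lemma length_route_le_height: "length (route T x) \<le> height T"
  by (induction T) auto

lemma route_valid_tree:
  "valid_tree nf A T \<Longrightarrow> distinct (map fst (route T x)) \<and> fst ` set (route T x) \<subseteq> {..<nf} - A"
proof (induction T arbitrary: A)
  case (Node a t l r)
  then have "a < nf" "a \<notin> A"
    "distinct (map fst (route l x)) \<and> fst ` set (route l x) \<subseteq> {..<nf} - insert a A"
    "distinct (map fst (route r x)) \<and> fst ` set (route r x) \<subseteq> {..<nf} - insert a A"
    by auto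
  then show ?case
    by auto
qed simp

lemma finite_routes: "finite (routes T)"
  by (induction T) auto

lemma card_routes_le: "card (routes T) \<le> 2 ^ height T"
proof (induction T)
  case (Node a t l r)
  have "card (routes (Node a t l r))
      \<le> card (Cons (a, t, True) ` routes l) + card (Cons (a, t, False) ` routes r)"
    by (simp add: card_Un_le)
  also have "\<dots> \<le> card (routes l) + card (routes r)"
    by (intro add_mono card_image_le finite_routes)
  also have "\<dots> \<le> 2 ^ height l + 2 ^ height r"
    using Node.IH by (rule add_mono)
  also have "\<dots> \<le> 2 ^ max (height l) (height r) + 2 ^ max (height l) (height r)"
    by (intro add_mono power_increasing) auto
  finally show ?case
    by simp
qed simp

lemma finite_shapes: "finite (shapes nf d)"
proof -
  have "shapes nf d \<subseteq> {\<sigma>. set \<sigma> \<subseteq> {..<nf} \<times> UNIV \<and> length \<sigma> \<le> d}"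
    unfolding shapes_def by auto
  then show ?thesis
    by (rule finite_subset) (simp add: finite_lists_length_le)
qed

lemma shape_route_in_shapes:
  "valid_tree nf {} T \<Longrightarrow> height T \<le> d \<Longrightarrow> shape (route T x) \<in> shapes nf d"
  using route_valid_tree[of nf "{}" T x] length_route_le_height[of T x]
  unfolding shapes_def shape_def by (auto simp: case_prod_beta comp_def)

lemma cell_subset_atMost: "cell w p i \<subseteq> {..w}"
  unfolding cell_def by auto

lemma passes_in_cell:
  assumes "x \<in> grid nf w" "passes p x"
  shows "x \<in> list_box nf (cell w p)"
  using assms unfolding grid_def list_box_def cell_def passes_def by auto

lemma cell_subset_grid_passes:
  assumes "fst ` set p \<subseteq> {..<nf}" "y \<in> list_box nf (cell w p)"
  shows "y \<in> grid nf w" "passes p y"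
proof -
  have cells: "length y = nf" "\<forall>i<nf. y ! i \<in> cell w p i"
    using assms(2) unfolding list_box_def by auto
  then show "y \<in> grid nf w"
    unfolding grid_def cell_def by auto
  have "(t \<le> real (y ! a)) = b" if "(a, t, b) \<in> set p" for a t b
  proof -
    have "a < nf"
      using that assms(1) by force
    then have "y ! a \<in> cell w p a"
      using cells by simp
    then show ?thesis
      using that unfolding cell_def by auto
  qed
  then show "passes p y"
    unfolding passes_def by auto
qed

lemma orthant_shape_subset:
  assumes "passes p x"
  shows "orthant nf I (shape p) x \<subseteq> {y. passes p y}"
proof
  fix y assume y: "y \<in> orthant nf I (shape p) x"
  have "(t \<le> real (y ! a)) = b" if "(a, t, b) \<in> set p" for a t b
  proof -
    have "(a, b) \<in> set (shape p)"
      using that unfolding shape_def by force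
    then have "dir_le b (x ! a) (y ! a)"
      using y unfolding orthant_def by auto
    moreover have "(t \<le> real (x ! a)) = b"
      using assms that unfolding passes_def by auto
    ultimately show ?thesis
      unfolding dir_le_def by (auto split: if_splits)
  qed
  then show "y \<in> {y. passes p y}"
    unfolding passes_def by auto
qed

lemma orthant_route_subset_disagreement:
  assumes "valid_tree nf {} T" "classify T x \<noteq> classify T' x"
  shows "orthant nf (cell w (route T x)) (shape (route T' x)) x
    \<subseteq> {y\<in>grid nf w. classify T y \<noteq> classify T' y}"
proof
  fix y assume y: "y \<in> orthant nf (cell w (route T x)) (shape (route T' x)) x"
  have route_features: "fst ` set (route T x) \<subseteq> {..<nf}"
    using route_valid_tree[OF assms(1)] by auto
  have y_cell: "y \<in> list_box nf (cell w (route T x))"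
    using y unfolding orthant_def by auto
  have "classify T y = classify T x"
    using classify_eq_if_passes_route cell_subset_grid_passes(2)[OF route_features y_cell] by blast
  moreover have "classify T' y = classify T' x"
    using classify_eq_if_passes_route orthant_shape_subset[OF passes_route] y by blast
  ultimately show "y \<in> {y\<in>grid nf w. classify T y \<noteq> classify T' y}"
    using cell_subset_grid_passes(1)[OF route_features y_cell] assms(2) by auto
qed

definition dis_ratio :: "('a \<Rightarrow> bool) set \<Rightarrow> 'a set \<Rightarrow> ('a \<Rightarrow> bool) \<Rightarrow> real \<Rightarrow> real" where
  "dis_ratio H S h r = real (card (DIS S (ball_H H S h r))) / (r * real (card S))"

lemma finite_DIS: "finite S \<Longrightarrow> finite (DIS S V)"
  unfolding DIS_def by simp

lemma dis_coeff_le: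
  assumes "H \<noteq> {}" and "\<And>h r. h \<in> H \<Longrightarrow> 0 < r \<Longrightarrow> dis_ratio H S h r \<le> B"
  shows "dis_coeff H S \<le> B"
  unfolding dis_coeff_def dis_coeff_h_def dis_ratio_def[symmetric]
  using assms by (intro cSUP_least) auto

lemma dis_ratio_le_dis_coeff:
  assumes "\<And>h r. h \<in> H \<Longrightarrow> 0 < r \<Longrightarrow> dis_ratio H S h r \<le> B" and "h \<in> H" "0 < r"
  shows "dis_ratio H S h r \<le> dis_coeff H S"
proof -
  have h_le: "dis_coeff_h H S h' \<le> B" if "h' \<in> H" for h'
    unfolding dis_coeff_h_def dis_ratio_def[symmetric]
    using assms(1) that by (intro cSUP_least) auto
  have "dis_ratio H S h r \<le> dis_coeff_h H S h"
    unfolding dis_coeff_h_def dis_ratio_def[symmetric]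
    using assms by (intro cSUP_upper bdd_aboveI2[where M = B]) auto
  also have "\<dots> \<le> dis_coeff H S"
    unfolding dis_coeff_def
    using assms(2) h_le by (intro cSUP_upper bdd_aboveI2[where M = B]) auto
  finally show ?thesis .
qed

lemma Leaf_in_DT_class: "classify (Leaf b) \<in> DT_class nf d"
  unfolding DT_class_def by force

section \<open>The upper bound\<close>

lemma DIS_ball_subset_small_orthant_points:
  assumes T: "valid_tree nf {} T"
  shows "DIS (grid nf w) (ball_H (DT_class nf d) (grid nf w) (classify T) r)
    \<subseteq> (\<Union>p\<in>routes T. \<Union>\<sigma>\<in>shapes nf d.
          small_orthant_points nf (cell w p) \<sigma> (r * real (card (grid nf w))))"
proof
  let ?S = "grid nf w" and ?h = "classify T"
  let ?B = "ball_H (DT_class nf d) ?S ?h r"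
  fix x assume x: "x \<in> DIS ?S ?B"
  obtain h1 h2 where h12: "h1 \<in> ?B" "h2 \<in> ?B" "h1 x \<noteq> h2 x"
    using x unfolding DIS_def by blast
  have "\<exists>h'\<in>?B. h' x \<noteq> ?h x"
    using h12 by (cases "h1 x = ?h x") auto
  then obtain h' where h': "h' \<in> ?B" "h' x \<noteq> ?h x"
    by blast
  obtain T' where T': "valid_tree nf {} T'" "height T' \<le> d" "h' = classify T'"
    using h'(1) unfolding ball_H_def DT_class_def by auto
  have "card (orthant nf (cell w (route T x)) (shape (route T' x)) x)
      \<le> card {y\<in>?S. ?h y \<noteq> h' y}"
    using orthant_route_subset_disagreement[OF T] h'(2) finite_grid
    unfolding T'(3) by (intro card_mono) auto
  moreover have "real (card {y\<in>?S. ?h y \<noteq> h' y}) \<le> r * real (card ?S)"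
    using h'(1) card_grid[of nf w] unfolding ball_H_def dist_S_def by (simp add: field_simps)
  moreover have "x \<in> list_box nf (cell w (route T x))"
    using x passes_in_cell[OF _ passes_route] unfolding DIS_def by blast
  ultimately have "x \<in> small_orthant_points nf (cell w (route T x)) (shape (route T' x))
      (r * real (card ?S))"
    unfolding small_orthant_points_def by auto
  then show "x \<in> (\<Union>p\<in>routes T. \<Union>\<sigma>\<in>shapes nf d. small_orthant_points nf (cell w p) \<sigma>
      (r * real (card ?S)))"
    using route_in_routes shape_route_in_shapes[OF T'(1,2)] by blast
qed

lemma one_le_harm_Suc: "1 \<le> (harm (Suc w) :: real)"
  using harm_mono[of 1 "Suc w"] by (simp add: harm_def)

lemma card_UN_small_orthant_points_le:
  assumes "height T \<le> d" "0 \<le> m"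
  shows "real (card (\<Union>p\<in>routes T. \<Union>\<sigma>\<in>shapes nf d. small_orthant_points nf (cell w p) \<sigma> m))
    \<le> 2 ^ d * real (card (shapes nf d)) * harm (Suc w) ^ d * m"
proof -
  have cell: "finite (cell w p i) \<and> card (cell w p i) \<le> Suc w" for p i
    using cell_subset_atMost[of w p i] card_mono[of "{..w}"] finite_subset by fastforce
  have each: "real (card (small_orthant_points nf (cell w p) \<sigma> m)) \<le> m * harm (Suc w) ^ d"
    if "\<sigma> \<in> shapes nf d" for p \<sigma>
  proof -
    have "real (card (small_orthant_points nf (cell w p) \<sigma> m)) \<le> m * harm (Suc w) ^ length \<sigma>"
      using that assms(2) cell by (intro card_small_orthant_points_le) (auto simp: shapes_def)
    also have "\<dots> \<le> m * harm (Suc w) ^ d"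
      using that assms(2) one_le_harm_Suc unfolding shapes_def
      by (intro mult_left_mono power_increasing) auto
    finally show ?thesis .
  qed
  have "card (\<Union>p\<in>routes T. \<Union>\<sigma>\<in>shapes nf d. small_orthant_points nf (cell w p) \<sigma> m)
      \<le> (\<Sum>p\<in>routes T. \<Sum>\<sigma>\<in>shapes nf d. card (small_orthant_points nf (cell w p) \<sigma> m))"
    by (intro order_trans[OF card_UN_le[OF finite_routes]] sum_mono card_UN_le finite_shapes)
  then have "real (card (\<Union>p\<in>routes T. \<Union>\<sigma>\<in>shapes nf d. small_orthant_points nf (cell w p) \<sigma> m))
      \<le> (\<Sum>p\<in>routes T. \<Sum>\<sigma>\<in>shapes nf d. real (card (small_orthant_points nf (cell w p) \<sigma> m)))"
    by (simp only: of_nat_sum[symmetric] of_nat_le_iff)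
  also have "\<dots> \<le> (\<Sum>p\<in>routes T. \<Sum>\<sigma>\<in>shapes nf d. m * harm (Suc w) ^ d)"
    by (intro sum_mono each)
  also have "\<dots> = real (card (routes T)) * real (card (shapes nf d)) * (m * harm (Suc w) ^ d)"
    by simp
  also have "\<dots> \<le> 2 ^ d * real (card (shapes nf d)) * (m * harm (Suc w) ^ d)"
  proof (rule mult_right_mono)
    have "card (routes T) \<le> (2::nat) ^ d"
      using card_routes_le[of T] power_increasing[OF assms(1), of "2::nat"] by linarith
    then have "real (card (routes T)) \<le> 2 ^ d"
      by (metis of_nat_le_iff of_nat_numeral of_nat_power)
    then show "real (card (routes T)) * real (card (shapes nf d)) \<le> 2 ^ d * real (card (shapes nf d))"
      by (rule mult_right_mono) simp
  qed (use assms(2) in \<open>simp add: harm_nonneg\<close>)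
  finally show ?thesis
    by (simp add: algebra_simps)
qed

lemma dis_ratio_DT_grid_le:
  assumes "h \<in> DT_class nf d" "0 < r"
  shows "dis_ratio (DT_class nf d) (grid nf w) h r
    \<le> 2 ^ d * real (card (shapes nf d)) * harm (Suc w) ^ d"
proof -
  obtain T where T: "valid_tree nf {} T" "height T \<le> d" "h = classify T"
    using assms(1) unfolding DT_class_def by auto
  let ?m = "r * real (card (grid nf w))"
  have fin_cells: "finite (\<Union>p\<in>routes T. \<Union>\<sigma>\<in>shapes nf d. small_orthant_points nf (cell w p) \<sigma> ?m)"
    using finite_subset[OF cell_subset_atMost]
    by (intro finite_UN_I finite_routes finite_shapes finite_small_orthant_points) auto
  have "real (card (DIS (grid nf w) (ball_H (DT_class nf d) (grid nf w) h r)))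
      \<le> real (card (\<Union>p\<in>routes T. \<Union>\<sigma>\<in>shapes nf d. small_orthant_points nf (cell w p) \<sigma> ?m))"
    unfolding T(3)
    by (intro of_nat_mono card_mono[OF fin_cells DIS_ball_subset_small_orthant_points[OF T(1)]])
  also have "\<dots> \<le> 2 ^ d * real (card (shapes nf d)) * harm (Suc w) ^ d * ?m"
    using assms(2) by (intro card_UN_small_orthant_points_le[OF T(2)]) simp
  finally show ?thesis
    using assms(2) unfolding dis_ratio_def by (simp add: divide_le_eq card_grid)
qed

lemma dis_coeff_DT_grid_le:
  "dis_coeff (DT_class nf d) (grid nf w) \<le> 2 ^ d * real (card (shapes nf d)) * harm (Suc w) ^ d"
  using Leaf_in_DT_class dis_ratio_DT_grid_le by (intro dis_coeff_le) blast+

section \<open>Lists with bounded product\<close>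

definition prod_le_lists :: "nat \<Rightarrow> nat \<Rightarrow> nat list set" where
  "prod_le_lists k T = {ms. length ms = k \<and> 0 \<notin> set ms \<and> prod_list ms \<le> T}"

lemma member_le_prod_list: "m \<in> set ms \<Longrightarrow> 0 \<notin> set ms \<Longrightarrow> m \<le> prod_list (ms :: nat list)"
  by (metis dvd_imp_le gr0I prod_list_dvd prod_list_zero_iff)

lemma prod_le_lists_subset: "prod_le_lists k T \<subseteq> {ms. set ms \<subseteq> {1..T} \<and> length ms = k}"
proof clarify
  fix ms assume ms: "ms \<in> prod_le_lists k T"
  have "m \<in> {1..T}" if "m \<in> set ms" for m
    using that ms member_le_prod_list[OF that] unfolding prod_le_lists_def
    by (auto simp: Suc_le_eq intro: gr0I)
  then show "set ms \<subseteq> {1..T} \<and> length ms = k"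
    using ms unfolding prod_le_lists_def by auto
qed

lemma finite_prod_le_lists: "finite (prod_le_lists k T)"
  by (rule finite_subset[OF prod_le_lists_subset]) (simp add: finite_lists_length_eq)

definition dyadic_block :: "nat \<Rightarrow> nat \<Rightarrow> nat \<Rightarrow> nat list set" where
  "dyadic_block E k i =
    (\<lambda>(m, ms). m # ms) ` ({2 ^ (E - 1 - i)..<2 ^ (E - i)} \<times> prod_le_lists k (2 ^ i))"

lemma dyadic_block_subset:
  assumes "i < E"
  shows "dyadic_block E k i \<subseteq> prod_le_lists (Suc k) (2 ^ E)"
proof
  fix xs assume "xs \<in> dyadic_block E k i"
  then obtain m ms where m: "2 ^ (E - 1 - i) \<le> m" "m < 2 ^ (E - i)"
    and ms: "ms \<in> prod_le_lists k (2 ^ i)" and xs: "xs = m # ms"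
    unfolding dyadic_block_def by auto
  have "prod_list xs \<le> 2 ^ (E - i) * 2 ^ i"
    using m ms unfolding xs prod_le_lists_def by (auto intro: mult_mono)
  also have "\<dots> = 2 ^ E"
    using assms by (simp flip: power_add)
  finally show "xs \<in> prod_le_lists (Suc k) (2 ^ E)"
    using m ms unfolding xs prod_le_lists_def
    by (auto simp: not_less_eq_eq[symmetric] order.strict_trans2[OF _ m(1)])
qed

lemma dyadic_blocks_disjoint:
  assumes "i < j"
  shows "dyadic_block E k i \<inter> dyadic_block E k j = {}"
proof -
  have le: "(2::nat) ^ (E - j) \<le> 2 ^ (E - 1 - i)"
    using assms by (intro power_increasing) auto
  have False if "xs \<in> dyadic_block E k i" "xs \<in> dyadic_block E k j" for xs
  proof -
    have "2 ^ (E - 1 - i) \<le> hd xs" "hd xs < 2 ^ (E - j)"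
      using that unfolding dyadic_block_def by auto
    with le show False
      by linarith
  qed
  then show ?thesis
    by blast
qed

lemma card_dyadic_block:
  assumes "i < E"
  shows "card (dyadic_block E k i) = 2 ^ (E - 1 - i) * card (prod_le_lists k (2 ^ i))"
proof -
  have "card (dyadic_block E k i)
      = card ({(2::nat) ^ (E - 1 - i)..<2 ^ (E - i)} \<times> prod_le_lists k (2 ^ i))"
    unfolding dyadic_block_def by (rule card_image) (auto simp: inj_on_def)
  also have "(2::nat) ^ (E - i) = 2 * 2 ^ (E - 1 - i)"
    using assms by (simp flip: power_Suc)
  finally show ?thesis
    by (simp add: card_cartesian_product)
qed

lemma card_UN_dyadic_blocks:
  "card (\<Union>i<E. dyadic_block E k i) = (\<Sum>i<E. card (dyadic_block E k i))"
proof (rule card_UN_disjoint)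
  show "\<forall>i\<in>{..<E}. finite (dyadic_block E k i)"
    unfolding dyadic_block_def using finite_prod_le_lists by auto
  show "\<forall>i\<in>{..<E}. \<forall>j\<in>{..<E}. i \<noteq> j \<longrightarrow> dyadic_block E k i \<inter> dyadic_block E k j = {}"
    using dyadic_blocks_disjoint by (metis Int_commute linorder_neqE_nat)
qed simp

lemma sum_choose_lessThan: "(\<Sum>i<n. i choose k) = n choose Suc k"
  by (cases n) (simp_all add: lessThan_Suc_atMost sum_choose_upper)

lemma card_prod_le_lists_ge: "2 ^ E * (E choose k) \<le> card (prod_le_lists (Suc k) (2 ^ E)) * 2 ^ k"
proof (induction k arbitrary: E)
  case 0
  have "(\<lambda>m. [m]) ` {1..2 ^ E} \<subseteq> prod_le_lists (Suc 0) (2 ^ E)"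
    unfolding prod_le_lists_def by auto
  then have "card ((\<lambda>m. [m]) ` {1..(2::nat) ^ E}) \<le> card (prod_le_lists (Suc 0) (2 ^ E))"
    by (rule card_mono[OF finite_prod_le_lists])
  then show ?case
    by (simp add: card_image inj_on_def)
next
  case (Suc k)
  let ?P = "\<lambda>i. prod_le_lists (Suc k) (2 ^ i)"
  have "2 ^ E * (E choose Suc k) = (\<Sum>i<E. 2 ^ (E - 1 - i) * 2 * (2 ^ i * (i choose k)))"
  proof -
    have "2 ^ E = 2 ^ (E - 1 - i) * 2 * (2::nat) ^ i" if "i < E" for i
    proof -
      have "(2::nat) ^ E = 2 ^ ((E - 1 - i) + 1 + i)"
        using that by simp
      then show ?thesis
        by (simp only: power_add power_one_right)
    qed
    then show ?thesis
      by (simp add: sum_choose_lessThan[symmetric] sum_distrib_left mult.assoc)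
  qed
  also have "\<dots> \<le> (\<Sum>i<E. 2 ^ (E - 1 - i) * 2 * (card (?P i) * 2 ^ k))"
    using Suc.IH by (intro sum_mono mult_left_mono) auto
  also have "\<dots> = (\<Sum>i<E. card (dyadic_block E (Suc k) i) * 2 ^ Suc k)"
    by (rule sum.cong) (simp_all add: card_dyadic_block)
  also have "\<dots> = (\<Sum>i<E. card (dyadic_block E (Suc k) i)) * 2 ^ Suc k"
    by (simp add: sum_distrib_right)
  also have "\<dots> \<le> card (prod_le_lists (Suc (Suc k)) (2 ^ E)) * 2 ^ Suc k"
    unfolding card_UN_dyadic_blocks[symmetric] using dyadic_block_subset
    by (intro mult_right_mono card_mono finite_prod_le_lists) auto
  finally show ?case .
qed

section \<open>The lower bound\<close>

fun dominance_tree :: "nat list \<Rightarrow> nat list \<Rightarrow> Defs.dtree" where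
  "dominance_tree [] x = Leaf True"
| "dominance_tree (a # as) x = Node a (real (x ! a)) (dominance_tree as x) (Leaf False)"

lemma classify_dominance_tree: "classify (dominance_tree as x) y \<longleftrightarrow> (\<forall>a\<in>set as. x ! a \<le> y ! a)"
  by (induction as) auto

lemma height_dominance_tree: "height (dominance_tree as x) = length as"
  by (induction as) auto

lemma valid_dominance_tree:
  "distinct as \<Longrightarrow> set as \<subseteq> {..<nf} - A \<Longrightarrow> valid_tree nf A (dominance_tree as x)"
  by (induction as arbitrary: A) (simp_all add: subset_Diff_insert)

lemma dominance_tree_in_DT_class:
  "d \<le> nf \<Longrightarrow> classify (dominance_tree [0..<d] x) \<in> DT_class nf d"
  unfolding DT_class_def using valid_dominance_tree[of "[0..<d]" nf "{}" x]
  by (fastforce simp: height_dominance_tree)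

lemma card_grid_dominating:
  assumes "d \<le> nf"
  shows "card {y\<in>grid nf w. \<forall>a<d. x ! a \<le> y ! a} = (\<Prod>a<d. Suc w - x ! a) * Suc w ^ (nf - d)"
proof -
  have "{y\<in>grid nf w. \<forall>a<d. x ! a \<le> y ! a} = list_box nf (\<lambda>i. if i < d then {x ! i..w} else {..w})"
    using assms unfolding grid_def list_box_def by auto
  then have "card {y\<in>grid nf w. \<forall>a<d. x ! a \<le> y ! a}
      = (\<Prod>i<nf. if i < d then Suc w - x ! i else Suc w)"
    by (simp add: card_list_box if_distrib cong: if_cong)
  also have "\<dots> = (\<Prod>a<d. Suc w - x ! a) * Suc w ^ (nf - d)"
  proof -
    have "{..<nf} \<inter> {i. i < d} = {..<d}" "{..<nf} \<inter> - {i. i < d} = {d..<nf}"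
      using assms by auto
    then show ?thesis
      by (simp add: prod.If_cases)
  qed
  finally show ?thesis .
qed

lemma small_corner_in_DIS:
  assumes "d \<le> nf" "x \<in> grid nf w" "0 \<le> r"
    and "real ((\<Prod>a<d. Suc w - x ! a) * Suc w ^ (nf - d)) \<le> r * real (card (grid nf w))"
  shows "x \<in> DIS (grid nf w) (ball_H (DT_class nf d) (grid nf w) (classify (Leaf False)) r)"
proof -
  let ?S = "grid nf w" and ?h0 = "classify (Leaf False)"
  define h' where "h' = classify (dominance_tree [0..<d] x)"
  have "{y\<in>?S. ?h0 y \<noteq> h' y} = {y\<in>?S. \<forall>a<d. x ! a \<le> y ! a}"
    unfolding h'_def by (auto simp: classify_dominance_tree)
  then have "dist_S ?S ?h0 h' \<le> r"
    using assms(4) card_grid_dominating[OF assms(1)] unfolding dist_S_def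
    by (simp add: card_grid divide_le_eq)
  then have "h' \<in> ball_H (DT_class nf d) ?S ?h0 r"
    unfolding ball_H_def h'_def using dominance_tree_in_DT_class[OF assms(1)] by blast
  moreover have "?h0 \<in> ball_H (DT_class nf d) ?S ?h0 r"
    unfolding ball_H_def dist_S_def using assms(3) Leaf_in_DT_class by auto
  moreover have "?h0 x \<noteq> h' x"
    unfolding h'_def by (simp add: classify_dominance_tree)
  ultimately show ?thesis
    unfolding DIS_def using assms(2) by blast
qed

definition corner_point :: "nat \<Rightarrow> nat list \<Rightarrow> nat list \<Rightarrow> nat list" where
  "corner_point w ms zs = map (\<lambda>m. Suc w - m) ms @ zs"

lemma prod_le_lists_range: "T \<le> Suc w \<Longrightarrow> ms \<in> prod_le_lists d T \<Longrightarrow> set ms \<subseteq> {1..Suc w}"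
  using prod_le_lists_subset by fastforce

lemma corner_point_mem:
  assumes "d \<le> nf" "T \<le> Suc w" "ms \<in> prod_le_lists d T" "zs \<in> grid (nf - d) w"
  shows "corner_point w ms zs \<in> {x\<in>grid nf w. (\<Prod>a<d. Suc w - x ! a) \<le> T}"
proof -
  have len: "length ms = d" and prod: "prod_list ms \<le> T"
    using assms(3) unfolding prod_le_lists_def by auto
  have range: "set ms \<subseteq> {1..Suc w}"
    using prod_le_lists_range[OF assms(2,3)] .
  have "Suc w - corner_point w ms zs ! a = ms ! a" if "a < d" for a
  proof -
    have "ms ! a \<in> {1..Suc w}"
      using that len range nth_mem by blast
    then show ?thesis
      using that len unfolding corner_point_def by (simp add: nth_append)
  qed
  then have "(\<Prod>a<d. Suc w - corner_point w ms zs ! a) = prod_list ms"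
    using len by (simp add: prod.list_conv_set_nth atLeast0LessThan)
  moreover have "corner_point w ms zs \<in> grid nf w"
    using len range assms(1,4) unfolding corner_point_def grid_eq_lists by fastforce
  ultimately show ?thesis
    using prod by simp
qed

lemma inj_on_corner_point:
  assumes "T \<le> Suc w"
  shows "inj_on (\<lambda>(ms, zs). corner_point w ms zs) (prod_le_lists d T \<times> UNIV)"
proof (rule inj_onI, clarify)
  fix ms zs ms' zs'
  assume ms: "ms \<in> prod_le_lists d T" "ms' \<in> prod_le_lists d T"
    and "corner_point w ms zs = corner_point w ms' zs'"
  then have "map (\<lambda>m. Suc w - m) ms = map (\<lambda>m. Suc w - m) ms'" "zs = zs'"
    unfolding corner_point_def prod_le_lists_def by auto
  moreover have "inj_on (\<lambda>m. Suc w - m) (set ms \<union> set ms')"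
    by (rule inj_on_subset[of _ "{1..Suc w}"])
      (use prod_le_lists_range[OF assms ms(1)] prod_le_lists_range[OF assms ms(2)]
        in \<open>auto simp: inj_on_def\<close>)
  ultimately show "ms = ms' \<and> zs = zs'"
    by (simp add: inj_on_map_eq_map)
qed

lemma card_prod_le_lists_grid_le:
  assumes "d \<le> nf" "T \<le> Suc w"
  shows "card (prod_le_lists d T) * Suc w ^ (nf - d)
    \<le> card {x\<in>grid nf w. (\<Prod>a<d. Suc w - x ! a) \<le> T}"
proof -
  have "card (prod_le_lists d T \<times> grid (nf - d) w)
      \<le> card {x\<in>grid nf w. (\<Prod>a<d. Suc w - x ! a) \<le> T}"
  proof (rule card_inj_on_le)
    show "inj_on (\<lambda>(ms, zs). corner_point w ms zs) (prod_le_lists d T \<times> grid (nf - d) w)"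
      using inj_on_corner_point[OF assms(2)] by (rule inj_on_subset) auto
    show "(\<lambda>(ms, zs). corner_point w ms zs) ` (prod_le_lists d T \<times> grid (nf - d) w)
        \<subseteq> {x\<in>grid nf w. (\<Prod>a<d. Suc w - x ! a) \<le> T}"
      using corner_point_mem[OF assms] by auto
  qed (simp add: finite_grid)
  then show ?thesis
    by (simp add: card_cartesian_product card_grid)
qed

lemma card_DIS_ball_Leaf_ge:
  assumes "d \<le> nf" "2 ^ E \<le> Suc w"
    and r: "r * real (card (grid nf w)) = 2 ^ E * real (Suc w ^ (nf - d))"
  shows "card (prod_le_lists d (2 ^ E)) * Suc w ^ (nf - d)
    \<le> card (DIS (grid nf w) (ball_H (DT_class nf d) (grid nf w) (classify (Leaf False)) r))"
proof -
  let ?S = "grid nf w"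
  have "{x\<in>?S. (\<Prod>a<d. Suc w - x ! a) \<le> 2 ^ E}
      \<subseteq> DIS ?S (ball_H (DT_class nf d) ?S (classify (Leaf False)) r)"
  proof (intro subsetI small_corner_in_DIS[OF assms(1)])
    fix x assume x: "x \<in> {x\<in>?S. (\<Prod>a<d. Suc w - x ! a) \<le> 2 ^ E}"
    then show "x \<in> ?S"
      by simp
    have "0 \<le> r * real (card ?S)" "0 < real (card ?S)"
      unfolding r by (simp_all add: card_grid)
    then show "0 \<le> r"
      by (meson not_le mult_neg_pos)
    have "real (\<Prod>a<d. Suc w - x ! a) \<le> 2 ^ E"
      using x by (metis (mono_tags, lifting) mem_Collect_eq of_nat_le_iff of_nat_numeral of_nat_power)
    then show "real ((\<Prod>a<d. Suc w - x ! a) * Suc w ^ (nf - d)) \<le> r * real (card ?S)"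
      unfolding r by (simp add: mult_right_mono)
  qed
  then have "card {x\<in>?S. (\<Prod>a<d. Suc w - x ! a) \<le> 2 ^ E}
      \<le> card (DIS ?S (ball_H (DT_class nf d) ?S (classify (Leaf False)) r))"
    by (rule card_mono[OF finite_DIS[OF finite_grid]])
  with card_prod_le_lists_grid_le[OF assms(1,2)] show ?thesis
    by (rule le_trans)
qed

lemma dis_coeff_DT_grid_ge_binomial:
  assumes "0 < d" "d \<le> nf" "2 ^ E \<le> Suc w"
  shows "real (E choose (d - 1)) / 2 ^ (d - 1) \<le> dis_coeff (DT_class nf d) (grid nf w)"
proof -
  let ?S = "grid nf w" and ?H = "DT_class nf d" and ?h0 = "classify (Leaf False)"
  let ?n = "real (card ?S)" and ?m = "real (Suc w ^ (nf - d))" and ?c = "card (prod_le_lists d (2 ^ E))"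
  define r where "r = 2 ^ E * ?m / ?n"
  have n_pos: "0 < ?n"
    by (simp add: card_grid)
  have rn: "r * ?n = 2 ^ E * ?m"
    unfolding r_def using n_pos by simp
  define D where "D = real (card (DIS ?S (ball_H ?H ?S ?h0 r)))"
  have "real ?c * ?m \<le> D"
    using card_DIS_ball_Leaf_ge[OF assms(2,3) rn] unfolding D_def
    by (simp only: of_nat_mult[symmetric] of_nat_le_iff)
  then have "real ?c / 2 ^ E \<le> dis_ratio ?H ?S ?h0 r"
    unfolding dis_ratio_def rn D_def[symmetric] by (simp add: field_simps)
  moreover have "real (E choose (d - 1)) / 2 ^ (d - 1) \<le> real ?c / 2 ^ E"
  proof -
    have "2 ^ E * (E choose (d - 1)) \<le> ?c * 2 ^ (d - 1)"
      using card_prod_le_lists_ge[of E "d - 1"] unfolding Suc_diff_1[OF assms(1)] .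
    then have "real (2 ^ E * (E choose (d - 1))) \<le> real (?c * 2 ^ (d - 1))"
      by (rule of_nat_mono)
    then show ?thesis
      by (simp add: field_simps)
  qed
  moreover have "dis_ratio ?H ?S ?h0 r \<le> dis_coeff ?H ?S"
    using dis_ratio_DT_grid_le Leaf_in_DT_class n_pos
    by (intro dis_ratio_le_dis_coeff) (auto simp: r_def)
  ultimately show ?thesis
    by linarith
qed

section \<open>Asymptotics\<close>

lemma ln_card_grid: "ln (real (card (grid nf w))) = real nf * ln (real (Suc w))"
  by (simp add: card_grid ln_realpow)

lemma harm_Suc_le_ln: "harm (Suc w) \<le> 1 + ln (real (Suc w))"
  using euler_mascheroni_sequence_decreasing[of 1 "Suc w"] by (simp add: harm_def)

lemma dis_coeff_DT_grid_nonneg: "0 \<le> dis_coeff (DT_class nf d) (grid nf w)"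
proof -
  have "0 \<le> dis_ratio (DT_class nf d) (grid nf w) (classify (Leaf False)) 1"
    unfolding dis_ratio_def by simp
  also have "\<dots> \<le> dis_coeff (DT_class nf d) (grid nf w)"
    using dis_ratio_DT_grid_le Leaf_in_DT_class by (intro dis_ratio_le_dis_coeff) auto
  finally show ?thesis .
qed

lemma dis_coeff_DT_grid_bigo:
  assumes "0 < nf"
  shows "(\<lambda>w. dis_coeff (DT_class nf d) (grid nf w)) \<in> O(\<lambda>w. ln (real (card (grid nf w))) ^ d)"
proof (rule bigoI)
  define K where "K = 2 ^ d * real (card (shapes nf d))"
  show "eventually (\<lambda>w. norm (dis_coeff (DT_class nf d) (grid nf w))
      \<le> K * 2 ^ d * norm (ln (real (card (grid nf w))) ^ d)) at_top"
    using eventually_ge_at_top[of 3]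
  proof eventually_elim
    case (elim w)
    define L where "L = ln (real (Suc w))"
    have "ln 4 \<le> L"
      unfolding L_def using elim by simp
    moreover have "ln (4::real) = 2 * ln 2"
      using ln_realpow[of 2 2] by simp
    ultimately have L: "1 \<le> L"
      using ln2_ge_two_thirds by linarith
    have "L \<le> real nf * L"
      using L assms by (simp add: mult_le_cancel_right1)
    then have "harm (Suc w) \<le> 2 * (real nf * L)"
      using harm_Suc_le_ln[of w] L unfolding L_def[symmetric] by linarith
    then have "harm (Suc w) ^ d \<le> (2 * (real nf * L)) ^ d"
      by (rule power_mono) (simp add: harm_nonneg)
    then have "K * harm (Suc w) ^ d \<le> K * (2 ^ d * (real nf * L) ^ d)"
      unfolding K_def by (intro mult_left_mono) (simp_all add: power_mult_distrib)
    then have "dis_coeff (DT_class nf d) (grid nf w) \<le> K * (2 ^ d * (real nf * L) ^ d)"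
      using dis_coeff_DT_grid_le[of nf d w] unfolding K_def by linarith
    then show ?case
      using dis_coeff_DT_grid_nonneg L unfolding ln_card_grid L_def[symmetric]
      by (simp add: abs_mult mult.assoc)
  qed
qed

lemma eventually_ln_Suc_ge: "eventually (\<lambda>w. c \<le> ln (real (Suc w))) at_top"
  using eventually_ge_at_top[of "nat \<lceil>exp c\<rceil>"]
proof eventually_elim
  case (elim w)
  then have "exp c \<le> real (Suc w)"
    by linarith
  then show ?case
    by (simp add: ln_ge_iff)
qed

lemma pow_div_le_binomial:
  assumes "real k \<le> u" "u \<le> real n"
  shows "(u / real (Suc k)) ^ k \<le> real (n choose k)"
proof (cases "k = 0")
  case False
  have "u / real (Suc k) \<le> u / real k"
    using assms(1) False by (intro divide_left_mono) auto
  also have "\<dots> \<le> real n / real k"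
    using assms(2) by (rule divide_right_mono) simp
  finally have "u / real (Suc k) \<le> real n / real k" .
  then have "(u / real (Suc k)) ^ k \<le> (real n / real k) ^ k"
    using assms by (intro power_mono) auto
  also have "\<dots> \<le> real (n choose k)"
    using assms by (intro binomial_ge_n_over_k_pow_k) linarith
  finally show ?thesis .
qed simp

lemma dis_coeff_DT_grid_ge_ln:
  assumes "0 < d" "d \<le> nf" "real d + ln 4 \<le> ln (real (Suc w))"
  shows "((ln (real (Suc w)) - ln 4) / real d) ^ (d - 1)
    \<le> 2 ^ (d - 1) * dis_coeff (DT_class nf d) (grid nf w)"
proof -
  obtain E where E: "2 ^ E \<le> Suc w" "Suc w < 2 ^ (E + 1)"
    using ex_power_ivl1[of 2 "Suc w"] by auto
  define u where "u = ln (real (Suc w)) - ln 4"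
  have "real (Suc w) < real (2 ^ (E + 1))"
    using E(2) by (simp only: of_nat_less_iff)
  then have "ln (real (Suc w)) < ln (2 ^ (E + 1))"
    by simp
  moreover have "ln ((2::real) ^ (E + 1)) = real E * ln 2 + ln 2" "ln (4::real) = 2 * ln 2"
    using ln_realpow[of 2 "E + 1"] ln_realpow[of 2 2] by (simp_all add: algebra_simps)
  moreover have "real E * ln 2 \<le> real E"
    using ln_2_less_1 by (simp add: mult_left_le)
  ultimately have "u \<le> real E"
    unfolding u_def using ln2_ge_two_thirds by linarith
  moreover have "real (d - 1) \<le> u"
    unfolding u_def using assms by simp
  ultimately have "(u / real d) ^ (d - 1) \<le> real (E choose (d - 1))"
    using pow_div_le_binomial[of "d - 1" u E] assms(1) by simp
  also have "\<dots> \<le> 2 ^ (d - 1) * dis_coeff (DT_class nf d) (grid nf w)"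
    using dis_coeff_DT_grid_ge_binomial[OF assms(1,2) E(1)] by (simp add: field_simps)
  finally show ?thesis
    unfolding u_def .
qed

lemma dis_coeff_DT_grid_bigomega:
  assumes "0 < d" "d \<le> nf"
  shows "(\<lambda>w. dis_coeff (DT_class nf d) (grid nf w))
    \<in> \<Omega>(\<lambda>w. (ln (real (card (grid nf w))) - ln 4 * real nf) ^ (d - 1))"
  unfolding bigomega_iff_bigo
proof (rule bigoI)
  show "eventually (\<lambda>w. norm ((ln (real (card (grid nf w))) - ln 4 * real nf) ^ (d - 1))
      \<le> (real nf * real d) ^ (d - 1) * 2 ^ (d - 1) * norm (dis_coeff (DT_class nf d) (grid nf w))) at_top"
    using eventually_ln_Suc_ge[of "real d + ln 4"]
  proof eventually_elim
    case (elim w)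
    define v where "v = (ln (real (Suc w)) - ln 4) / real d"
    have "ln (real (card (grid nf w))) - ln 4 * real nf = real nf * real d * v"
      unfolding ln_card_grid v_def using assms(1) by (simp add: field_simps)
    moreover have "0 \<le> v"
      unfolding v_def by (rule divide_nonneg_nonneg) (use elim in linarith, simp)
    moreover have "v ^ (d - 1) \<le> 2 ^ (d - 1) * dis_coeff (DT_class nf d) (grid nf w)"
      unfolding v_def using dis_coeff_DT_grid_ge_ln[OF assms elim] .
    ultimately show ?case
      using dis_coeff_DT_grid_nonneg
      by (simp add: power_mult_distrib abs_mult mult.assoc mult_left_mono)
  qed
qed

theorem theorem1:
  fixes nf d :: nat
  assumes "nf > 0" and "d > 0" and "d \<le> nf"
  shows "(\<lambda>w. dis_coeff (DT_class nf d) (grid nf w))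
           \<in> O(\<lambda>w. ln (real (card (grid nf w))) ^ d)
       \<and> (\<lambda>w. dis_coeff (DT_class nf d) (grid nf w))
           \<in> \<Omega>(\<lambda>w. ((1 / 2 ^ nf) / (real d ^ (d - 1) * fact d))
                      * (ln (real (card (grid nf w))) - ln 4 * real nf) ^ (d - 1))"
  \<comment> \<open>\<open>simp\<close> drops the nonzero constant factor inside \<open>\<Omega>\<close>\<close>
  using dis_coeff_DT_grid_bigo[OF assms(1)] dis_coeff_DT_grid_bigomega[OF assms(2,3)] assms(2)
  by simp

end
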